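(* $U_{2,4}\oplus U_{2,4}$ is an excluded minor for $\mathcal M_2$: it is not in $\mathcal M_2$, but every proper minor of it is in $\mathcal M_2$.
   Context: An integer matrix $A$ is $\Delta$-modular if the determinant of every $\operatorname{rank}(A)\times\operatorname{rank}(A)$ submatrix has absolute value at most $\Delta$. $\mathcal M_2$ is the class of matroids isomorphic to the real vector matroid of the columns of some $2$-modular matrix. *)

theory Defs
  imports "Jordan_Normal_Form.DL_Submatrix" "Jordan_Normal_Form.Determinant"
begin

type_synonym 'a matroid = "'a set \<times> 'a set set"

definition ground :: "'a matroid \<Rightarrow> 'a set" where "ground M = fst M"
definition indep :: "'a matroid \<Rightarrow> 'a set \<Rightarrow> bool" where "indep M X \<longleftrightarrow> X \<in> snd M"

definition matroid :: "'a matroid \<Rightarrow> bool" where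
  "matroid M \<longleftrightarrow> finite (ground M) \<and> (\<forall>X. indep M X \<longrightarrow> X \<subseteq> ground M) \<and> indep M {}
     \<and> (\<forall>X Y. indep M X \<and> Y \<subseteq> X \<longrightarrow> indep M Y)
     \<and> (\<forall>X Y. indep M X \<and> indep M Y \<and> card X < card Y \<longrightarrow> (\<exists>y\<in>Y - X. indep M (insert y X)))"

definition mrank :: "'a matroid \<Rightarrow> 'a set \<Rightarrow> nat" where
  "mrank M X = Max {card Y | Y. Y \<subseteq> X \<and> indep M Y}"

definition deletion :: "'a matroid \<Rightarrow> 'a set \<Rightarrow> 'a matroid" where
  "deletion M D = (ground M - D, {X. indep M X \<and> X \<subseteq> ground M - D})"

text \<open>Contraction via the rank function: r_{M/C}(X) = r(X \<union> C) - r(C).\<close>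
definition contraction :: "'a matroid \<Rightarrow> 'a set \<Rightarrow> 'a matroid" where
  "contraction M C = (ground M - C,
     {X. X \<subseteq> ground M - C \<and> mrank M (X \<union> C) = card X + mrank M C})"

definition minor_of :: "'a matroid \<Rightarrow> 'a set \<Rightarrow> 'a set \<Rightarrow> 'a matroid" where
  "minor_of M C D = deletion (contraction M C) D"

definition matroid_iso :: "'a matroid \<Rightarrow> 'b matroid \<Rightarrow> bool" where
  "matroid_iso M N \<longleftrightarrow> (\<exists>f. bij_betw f (ground M) (ground N)
      \<and> (\<forall>X \<subseteq> ground M. indep M X \<longleftrightarrow> indep N (f ` X)))"

definition uniform_matroid :: "nat \<Rightarrow> nat \<Rightarrow> nat matroid" where
  "uniform_matroid r n = ({0..<n}, {X. X \<subseteq> {0..<n} \<and> card X \<le> r})"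

definition direct_sum :: "'a matroid \<Rightarrow> 'b matroid \<Rightarrow> ('a + 'b) matroid" where
  "direct_sum M N = (Inl ` ground M \<union> Inr ` ground N,
     {X. indep M (Inl -` X) \<and> indep N (Inr -` X) \<and> X \<subseteq> Inl ` ground M \<union> Inr ` ground N})"

definition cols_lin_indep :: "int mat \<Rightarrow> nat set \<Rightarrow> bool" where
  "cols_lin_indep A X \<longleftrightarrow> (\<forall>c :: nat \<Rightarrow> real.
      (\<forall>i < dim_row A. (\<Sum>j\<in>X. c j * real_of_int (A $$ (i, j))) = 0) \<longrightarrow> (\<forall>j\<in>X. c j = 0))"

definition vector_matroid :: "int mat \<Rightarrow> nat matroid" where
  "vector_matroid A = ({0..<dim_col A}, {X. X \<subseteq> {0..<dim_col A} \<and> cols_lin_indep A X})"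

definition mat_rank :: "int mat \<Rightarrow> nat" where
  "mat_rank A = Max {card X | X. X \<subseteq> {0..<dim_col A} \<and> cols_lin_indep A X}"

definition delta_modular :: "int \<Rightarrow> int mat \<Rightarrow> bool" where
  "delta_modular \<Delta> A \<longleftrightarrow> (\<forall>I J. I \<subseteq> {0..<dim_row A} \<and> J \<subseteq> {0..<dim_col A}
      \<and> card I = mat_rank A \<and> card J = mat_rank A \<longrightarrow> \<bar>det (submatrix A I J)\<bar> \<le> \<Delta>)"

definition in_M2 :: "'a matroid \<Rightarrow> bool" where
  "in_M2 M \<longleftrightarrow> (\<exists>A. delta_modular 2 A \<and> matroid_iso M (vector_matroid A))"

end

theory Submission
  imports Defs
begin

lemma det_2x2:
  assumes "B \<in> carrier_mat 2 2"
  shows "det B = B $$ (0,0) * B $$ (1,1) - B $$ (0,1) * B $$ (1,0)"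
proof -
  have "det B = B $$ (0,0) * cofactor B 0 0 + B $$ (0,1) * cofactor B 0 1"
    using laplace_expansion_row[OF assms, of 0] by (simp add: numeral_2_eq_2)
  moreover have "cofactor B 0 0 = B $$ (1,1)" "cofactor B 0 1 = - B $$ (1,0)"
    unfolding cofactor_def using assms by (subst det_single; auto simp: mat_delete_def)+
  ultimately show ?thesis by (simp add: algebra_simps)
qed

lemma det_first_row_pivot:
  assumes B: "(B :: 'a :: comm_ring_1 mat) \<in> carrier_mat (Suc k) (Suc k)"
    and row0: "\<And>j. 0 < j \<Longrightarrow> j < Suc k \<Longrightarrow> B $$ (0,j) = 0"
  shows "det B = B $$ (0,0) * det (mat k k (\<lambda>(i,j). B $$ (Suc i, Suc j)))"
proof -
  have "det B = (\<Sum>j<Suc k. B $$ (0,j) * cofactor B 0 j)"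
    by (rule laplace_expansion_row[OF B]) simp
  also have "\<dots> = B $$ (0,0) * cofactor B 0 0"
    using row0 by (auto simp: lessThan_Suc_eq_insert_0 intro!: sum.neutral)
  finally have "det B = B $$ (0,0) * cofactor B 0 0" .
  moreover have "mat_delete B 0 0 = mat k k (\<lambda>(i,j). B $$ (Suc i, Suc j))"
    using B by (intro eq_matI) (auto simp: mat_delete_def)
  ultimately show ?thesis by (simp add: cofactor_def)
qed

lemma det_subtract_first_col_multiples:
  assumes B: "(B :: 'a :: comm_ring_1 mat) \<in> carrier_mat (Suc k) (Suc k)"
  shows "det (mat (Suc k) (Suc k) (\<lambda>(i,j). if j = 0 then B $$ (i,0) else B $$ (i,j) - l j * B $$ (i,0)))
    = det B"
proof -
  define E where "E = mat (Suc k) (Suc k) (\<lambda>(s,t). if s = t then 1 else if s = 0 then - l t else 0)"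
  have E: "E \<in> carrier_mat (Suc k) (Suc k)" by (simp add: E_def)
  have "diag_mat E = replicate (Suc k) 1"
    by (rule nth_equalityI) (simp_all add: diag_mat_def E_def del: upt_Suc replicate_Suc)
  moreover have "upper_triangular E" by (auto simp: upper_triangular_def E_def)
  ultimately have "det E = 1" using det_upper_triangular[OF _ E] by simp
  moreover have "mat (Suc k) (Suc k) (\<lambda>(i,j). if j = 0 then B $$ (i,0) else B $$ (i,j) - l j * B $$ (i,0))
      = B * E"
  proof (rule eq_matI)
    fix i j assume ij: "i < dim_row (B * E)" "j < dim_col (B * E)"
    have "(B * E) $$ (i,j) = (\<Sum>s<Suc k. B $$ (i,s) * E $$ (s,j))"
      using ij B E by (simp add: scalar_prod_def atLeast0LessThan)
    also have "\<dots> = B $$ (i,0) * E $$ (0,j) + (\<Sum>s<k. B $$ (i,Suc s) * E $$ (Suc s,j))"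
      by (simp only: sum.lessThan_Suc_shift)
    also have "\<dots> = (if j = 0 then B $$ (i,0) else B $$ (i,j) - l j * B $$ (i,0))"
      using ij B E by (cases j) (auto simp: E_def if_distrib cong: if_cong)
    finally show "mat (Suc k) (Suc k) (\<lambda>(i,j). if j = 0 then B $$ (i,0) else B $$ (i,j) - l j * B $$ (i,0))
      $$ (i,j) = (B * E) $$ (i,j)" using ij B E by simp
  qed (use B E in auto)
  ultimately show ?thesis using det_mult[OF B E] by simp
qed

lemma ex_nonsingular_row_selection:
  fixes v :: "nat \<Rightarrow> nat \<Rightarrow> 'a :: field"
  assumes "\<And>c. (\<And>r. r < m \<Longrightarrow> (\<Sum>t<k. c t * v t r) = 0) \<Longrightarrow> \<forall>t<k. c t = 0"
  shows "\<exists>\<rho>. inj_on \<rho> {..<k} \<and> \<rho> ` {..<k} \<subseteq> {..<m} \<and> det (mat k k (\<lambda>(i,t). v t (\<rho> i))) \<noteq> 0"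
  using assms
proof (induction k arbitrary: v)
  case 0
  show ?case by (intro exI[of _ id]) simp
next
  case (Suc k)
  obtain r0 where r0: "r0 < m" "v 0 r0 \<noteq> 0"
  proof (rule ccontr)
    assume no_r0: "\<not> thesis"
    have "\<forall>t<Suc k. (if t = 0 then 1 else 0 :: 'a) = 0"
    proof (rule Suc.prems)
      fix r assume "r < m"
      then have "v 0 r = 0" using that no_r0 by blast
      then show "(\<Sum>t<Suc k. (if t = 0 then 1 else 0) * v t r) = 0"
        by (simp add: sum.lessThan_Suc_shift del: sum.lessThan_Suc)
    qed
    then show False by auto
  qed
  define l where "l t = v t r0 / v 0 r0" for t
  define w where "w t r = v (Suc t) r - l (Suc t) * v 0 r" for t r
  have w_r0: "w t r0 = 0" for t using r0 by (simp add: w_def l_def)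
  have "\<forall>t<k. c t = 0" if rel: "\<And>r. r < m \<Longrightarrow> (\<Sum>t<k. c t * w t r) = 0" for c
  proof -
    define c' where "c' = case_nat (- (\<Sum>s<k. c s * l (Suc s))) c"
    have "\<forall>t<Suc k. c' t = 0"
    proof (rule Suc.prems)
      fix r assume "r < m"
      have "(\<Sum>t<Suc k. c' t * v t r) = (\<Sum>t<k. c t * w t r)"
        by (simp add: c'_def w_def sum.lessThan_Suc_shift sum_distrib_left algebra_simps
            sum_subtractf del: sum.lessThan_Suc)
      then show "(\<Sum>t<Suc k. c' t * v t r) = 0" using rel \<open>r < m\<close> by simp
    qed
    then show ?thesis by (auto simp: c'_def)
  qed
  then obtain \<rho>' where \<rho>': "inj_on \<rho>' {..<k}" "\<rho>' ` {..<k} \<subseteq> {..<m}"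
    and det_W: "det (mat k k (\<lambda>(i,t). w t (\<rho>' i))) \<noteq> 0"
    using Suc.IH by blast
  have "r0 \<notin> \<rho>' ` {..<k}"
  proof
    assume "r0 \<in> \<rho>' ` {..<k}"
    then obtain i0 where "i0 < k" "\<rho>' i0 = r0" by auto
    then have "det (mat k k (\<lambda>(i,t). w t (\<rho>' i))) = 0"
      by (subst laplace_expansion_row[of _ k i0]) (auto simp: w_r0)
    with det_W show False by simp
  qed
  define \<rho> where "\<rho> = case_nat r0 \<rho>'"
  have "inj_on \<rho> {..<Suc k}"
    using \<rho>'(1) \<open>r0 \<notin> \<rho>' ` {..<k}\<close>
    by (auto simp: \<rho>_def inj_on_def lessThan_Suc_eq_insert_0 split: nat.splits)
  moreover have "\<rho> ` {..<Suc k} \<subseteq> {..<m}"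
    using \<rho>'(2) r0 by (auto simp: \<rho>_def lessThan_Suc_eq_insert_0)
  moreover have "det (mat (Suc k) (Suc k) (\<lambda>(i,t). v t (\<rho> i))) = v 0 r0 * det (mat k k (\<lambda>(i,t). w t (\<rho>' i)))"
  proof -
    let ?V = "mat (Suc k) (Suc k) (\<lambda>(i,t). v t (\<rho> i))"
    let ?V' = "mat (Suc k) (Suc k) (\<lambda>(i,j). if j = 0 then ?V $$ (i,0) else ?V $$ (i,j) - l j * ?V $$ (i,0))"
    have "det ?V = det ?V'" by (rule det_subtract_first_col_multiples[symmetric]) simp
    also have "\<dots> = ?V' $$ (0,0) * det (mat k k (\<lambda>(i,j). ?V' $$ (Suc i, Suc j)))"
      by (rule det_first_row_pivot) (use r0 in \<open>auto simp: \<rho>_def l_def\<close>)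
    also have "mat k k (\<lambda>(i,j). ?V' $$ (Suc i, Suc j)) = mat k k (\<lambda>(i,t). w t (\<rho>' i))"
      by (rule eq_matI) (auto simp: \<rho>_def w_def)
    finally show ?thesis by (simp add: \<rho>_def)
  qed
  ultimately show ?case using r0 det_W by auto
qed

lemma bij_betw_pick:
  assumes "finite J"
  shows "bij_betw (pick J) {..<card J} J"
proof (rule bij_betw_imageI)
  show "inj_on (pick J) {..<card J}"
    by (rule inj_onI) (metis lessThan_iff linorder_cases pick_mono_le less_irrefl)
  show "pick J ` {..<card J} = J"
  proof
    show "pick J ` {..<card J} \<subseteq> J" using pick_in_set_le by auto
    show "J \<subseteq> pick J ` {..<card J}"
    proof
      fix j assume "j \<in> J"
      then have "card {a \<in> J. a < j} < card J" by (intro psubset_card_mono assms) auto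
      then show "j \<in> pick J ` {..<card J}" using pick_card_in_set[OF \<open>j \<in> J\<close>] by force
    qed
  qed
qed

lemma cols_lin_indep_subset:
  assumes "cols_lin_indep A Y" "X \<subseteq> Y" "finite Y"
  shows "cols_lin_indep A X"
  unfolding cols_lin_indep_def
proof (intro allI impI)
  fix c :: "nat \<Rightarrow> real"
  assume rel: "\<forall>i<dim_row A. (\<Sum>j\<in>X. c j * real_of_int (A $$ (i, j))) = 0"
  define c' where "c' j = (if j \<in> X then c j else 0)" for j
  have "(\<Sum>j\<in>Y. c' j * real_of_int (A $$ (i, j))) = (\<Sum>j\<in>X. c j * real_of_int (A $$ (i, j)))" for i
    using assms(2,3) by (intro sum.mono_neutral_cong_right) (auto simp: c'_def)
  then show "\<forall>j\<in>X. c j = 0"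
    using assms(1,2) rel unfolding cols_lin_indep_def by (metis c'_def subsetD)
qed

lemma det_submatrix_dependent_cols:
  assumes J: "J \<subseteq> {0..<dim_col A}" and dep: "\<not> cols_lin_indep A J"
  shows "det (submatrix A I J) = 0"
proof (cases "dim_row (submatrix A I J) = dim_col (submatrix A I J)")
  case False
  then show ?thesis unfolding det_def by auto
next
  case True
  define k where "k = card J"
  have "finite J" using J finite_subset by blast
  have "{j. j < dim_col A \<and> j \<in> J} = J" using J by auto
  then have dims: "dim_col (submatrix A I J) = k" "dim_row (submatrix A I J) = k"
    using True by (simp_all add: dim_submatrix k_def)
  let ?S = "map_mat real_of_int (submatrix A I J)"
  have S: "?S \<in> carrier_mat k k" using dims by auto
  obtain c :: "nat \<Rightarrow> real" and j0 where
    rel: "\<And>i. i < dim_row A \<Longrightarrow> (\<Sum>j\<in>J. c j * real_of_int (A $$ (i, j))) = 0"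
    and "j0 \<in> J" "c j0 \<noteq> 0"
    using dep unfolding cols_lin_indep_def by blast
  have pick: "bij_betw (pick J) {..<k} J" using bij_betw_pick[OF \<open>finite J\<close>] by (simp add: k_def)
  define v where "v = vec k (\<lambda>t. c (pick J t))"
  have "v \<noteq> 0\<^sub>v k"
  proof
    assume "v = 0\<^sub>v k"
    obtain t where "t < k" "pick J t = j0"
      using pick \<open>j0 \<in> J\<close> unfolding bij_betw_def by (metis imageE lessThan_iff)
    then show False using \<open>v = 0\<^sub>v k\<close> \<open>c j0 \<noteq> 0\<close> unfolding v_def by (metis index_vec index_zero_vec(1))
  qed
  moreover have "?S *\<^sub>v v = 0\<^sub>v k"
  proof (rule eq_vecI)
    fix i assume "i < dim_vec (0\<^sub>v k)"
    then have "i < k" by simp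
    then have i: "i < card {i. i < dim_row A \<and> i \<in> I}" using dims by (simp add: dim_submatrix)
    have "(?S *\<^sub>v v) $ i = (\<Sum>t<k. real_of_int (A $$ (pick I i, pick J t)) * c (pick J t))"
      using \<open>i < k\<close> dims \<open>{j. j < dim_col A \<and> j \<in> J} = J\<close>
      by (auto simp: scalar_prod_def submatrix_index[OF i] atLeast0LessThan v_def k_def
          intro!: sum.cong)
    also have "\<dots> = (\<Sum>j\<in>J. real_of_int (A $$ (pick I i, j)) * c j)"
      using sum.reindex_bij_betw[OF pick] .
    also have "\<dots> = 0" using rel[OF pick_le[OF i]] by (simp add: mult.commute)
    finally show "(?S *\<^sub>v v) $ i = 0\<^sub>v k $ i" using \<open>i < k\<close> by simp
  qed (use S in auto)
  moreover have "v \<in> carrier_vec k" by (simp add: v_def)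
  ultimately have "det ?S = 0" using det_0_iff_vec_prod_zero[OF S] by blast
  then show ?thesis by simp
qed

lemma ex_permutes_pick_image:
  assumes inj: "inj_on \<rho> {..<k}"
  shows "\<exists>\<pi>. \<pi> permutes {0..<k} \<and> (\<forall>i<k. pick (\<rho> ` {..<k}) (\<pi> i) = \<rho> i)"
proof -
  let ?I = "\<rho> ` {..<k}"
  have pick: "bij_betw (pick ?I) {..<k} ?I"
    using bij_betw_pick[of ?I] by (simp add: card_image[OF inj])
  define \<pi> where "\<pi> i = (if i < k then inv_into {..<k} (pick ?I) (\<rho> i) else i)" for i
  have "bij_betw (inv_into {..<k} (pick ?I) \<circ> \<rho>) {..<k} {..<k}"
    by (rule bij_betw_trans[OF bij_betw_imageI[OF inj refl] bij_betw_inv_into[OF pick]])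
  then have "bij_betw \<pi> {..<k} {..<k}"
    by (rule bij_betw_cong[THEN iffD2, rotated]) (simp add: \<pi>_def)
  then have "bij_betw \<pi> {0..<k} {0..<k}" by (simp add: atLeast0LessThan)
  then have "\<pi> permutes {0..<k}" by (rule bij_imp_permutes) (simp add: \<pi>_def)
  moreover have "pick ?I (\<pi> i) = \<rho> i" if "i < k" for i
    using that pick by (simp add: \<pi>_def f_inv_into_f bij_betw_def)
  ultimately show ?thesis by blast
qed

lemma det_selection_eq_submatrix:
  fixes B :: "'a :: comm_ring_1 mat"
  assumes \<rho>: "inj_on \<rho> {..<k}" "\<rho> ` {..<k} \<subseteq> {..<dim_row B}"
    and q: "inj_on q {..<k}" "q ` {..<k} \<subseteq> {..<dim_col B}"
  defines "D \<equiv> det (submatrix B (\<rho> ` {..<k}) (q ` {..<k}))"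
  shows "det (mat k k (\<lambda>(i,t). B $$ (\<rho> i, q t))) \<in> {D, - D}"
proof -
  let ?I = "\<rho> ` {..<k}" and ?J = "q ` {..<k}"
  obtain \<pi> where \<pi>: "\<pi> permutes {0..<k}" "\<And>i. i < k \<Longrightarrow> pick ?I (\<pi> i) = \<rho> i"
    using ex_permutes_pick_image[OF \<rho>(1)] by blast
  obtain \<sigma> where \<sigma>: "\<sigma> permutes {0..<k}" "\<And>i. i < k \<Longrightarrow> pick ?J (\<sigma> i) = q i"
    using ex_permutes_pick_image[OF q(1)] by blast
  have \<pi>_less: "\<pi> i < k" and \<sigma>_less: "\<sigma> i < k" if "i < k" for i
    using permutes_in_image[OF \<pi>(1)] permutes_in_image[OF \<sigma>(1)] that by auto
  define N where "N = mat k k (\<lambda>(i,t). B $$ (pick ?I i, q t))"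
  define Q where "Q = mat k k (\<lambda>(t,i). B $$ (pick ?I i, pick ?J t))"
  have "mat k k (\<lambda>(i,t). B $$ (\<rho> i, q t)) = mat k k (\<lambda>(i,t). N $$ (\<pi> i, t))"
    by (intro eq_matI) (auto simp: N_def \<pi>_less \<pi>(2))
  then have "det (mat k k (\<lambda>(i,t). B $$ (\<rho> i, q t))) = signof \<pi> * det N"
    using det_permute_rows[OF _ \<pi>(1), of N] by (simp add: N_def)
  also have "transpose_mat N = mat k k (\<lambda>(t,i). Q $$ (\<sigma> t, i))"
    by (intro eq_matI) (auto simp: N_def Q_def \<sigma>_less \<sigma>(2))
  then have "det N = signof \<sigma> * det Q"
    using det_permute_rows[OF _ \<sigma>(1), of Q] det_transpose[of N k] by (simp add: Q_def N_def)
  also have "{i. i < dim_row B \<and> i \<in> ?I} = ?I" "{j. j < dim_col B \<and> j \<in> ?J} = ?J"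
    using \<rho>(2) q(2) by auto
  then have "transpose_mat Q = submatrix B ?I ?J"
    using card_image[OF \<rho>(1)] card_image[OF q(1)] by (intro eq_matI) (auto simp: Q_def submatrix_def)
  then have "det Q = D" using det_transpose[of Q k] by (simp add: Q_def D_def)
  finally have "det (mat k k (\<lambda>(i,t). B $$ (\<rho> i, q t))) = signof \<pi> * signof \<sigma> * D"
    by (simp add: mult.assoc)
  then show ?thesis by (cases "evenperm \<pi>"; cases "evenperm \<sigma>") (auto simp: sign_def)
qed

lemma delta_modular_det_selection:
  assumes "delta_modular \<Delta> A" "mat_rank A = k"
    and \<rho>: "inj_on \<rho> {..<k}" "\<rho> ` {..<k} \<subseteq> {..<dim_row A}"
    and q: "inj_on q {..<k}" "q ` {..<k} \<subseteq> {..<dim_col A}"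
  shows "\<exists>z. \<bar>z\<bar> \<le> \<Delta> \<and> det (mat k k (\<lambda>(i,t). real_of_int (A $$ (\<rho> i, q t)))) = of_int z"
proof -
  let ?I = "\<rho> ` {..<k}" and ?J = "q ` {..<k}"
  have "\<bar>det (submatrix A ?I ?J)\<bar> \<le> \<Delta>"
    using assms card_image[OF \<rho>(1)] card_image[OF q(1)]
    unfolding delta_modular_def atLeast0LessThan by auto
  moreover have "det (mat k k (\<lambda>(i,t). map_mat real_of_int A $$ (\<rho> i, q t))) \<in>
      {det (submatrix (map_mat real_of_int A) ?I ?J), - det (submatrix (map_mat real_of_int A) ?I ?J)}"
    using det_selection_eq_submatrix[of \<rho> k "map_mat real_of_int A" q] \<rho> q by simp
  moreover have "submatrix (map_mat real_of_int A) ?I ?J = map_mat real_of_int (submatrix A ?I ?J)"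
    by (rule eq_matI) (auto simp: submatrix_def pick_le)
  moreover have "\<rho> i < dim_row A" "q i < dim_col A" if "i < k" for i
    using \<rho>(2) q(2) that by auto
  then have "mat k k (\<lambda>(i,t). map_mat real_of_int A $$ (\<rho> i, q t))
      = mat k k (\<lambda>(i,t). real_of_int (A $$ (\<rho> i, q t)))"
    by (intro eq_matI) auto
  ultimately have "det (mat k k (\<lambda>(i,t). real_of_int (A $$ (\<rho> i, q t)))) \<in>
      {of_int (det (submatrix A ?I ?J)), of_int (- det (submatrix A ?I ?J))}"
    by simp
  then show ?thesis using \<open>\<bar>det (submatrix A ?I ?J)\<bar> \<le> \<Delta>\<close> by (metis abs_minus_cancel insertE singletonD)
qed

lemma card_vimage_Inl_Inr:
  assumes "finite X"
  shows "card X = card (Inl -` X) + card (Inr -` X)"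
proof -
  have "X = Inl ` (Inl -` X) \<union> Inr ` (Inr -` X)"
  proof (intro equalityI subsetI)
    fix x assume "x \<in> X" then show "x \<in> Inl ` (Inl -` X) \<union> Inr ` (Inr -` X)" by (cases x) auto
  qed auto
  moreover have "finite (Inl -` X)" "finite (Inr -` X)" using assms by (simp_all add: finite_vimageI)
  moreover have "Inl ` (Inl -` X) \<inter> Inr ` (Inr -` X) = {}" by auto
  ultimately show ?thesis by (metis card_Un_disjoint card_image finite_imageI inj_Inl inj_Inr inj_on_subset
      subset_UNIV)
qed

lemma ground_vector_matroid: "ground (vector_matroid A) = {0..<dim_col A}"
  by (simp add: ground_def vector_matroid_def)

lemma indep_vector_matroid:
  "indep (vector_matroid A) X \<longleftrightarrow> X \<subseteq> {0..<dim_col A} \<and> cols_lin_indep A X"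
  by (simp add: indep_def vector_matroid_def)

lemma mat_rank_eq_mrank_iso:
  assumes "matroid_iso M (vector_matroid A)"
  shows "mat_rank A = mrank M (ground M)"
proof -
  obtain f where f: "bij_betw f (ground M) {0..<dim_col A}"
    and ind: "\<And>X. X \<subseteq> ground M \<Longrightarrow> indep M X \<longleftrightarrow> f ` X \<subseteq> {0..<dim_col A} \<and> cols_lin_indep A (f ` X)"
    using assms unfolding matroid_iso_def ground_vector_matroid indep_vector_matroid by blast
  have "{card Y | Y. Y \<subseteq> ground M \<and> indep M Y} = {card X | X. X \<subseteq> {0..<dim_col A} \<and> cols_lin_indep A X}"
  proof (intro equalityI subsetI)
    fix n assume "n \<in> {card Y | Y. Y \<subseteq> ground M \<and> indep M Y}"
    then obtain Y where "Y \<subseteq> ground M" "indep M Y" "n = card Y" by blast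
    moreover have "card (f ` Y) = card Y"
      using f \<open>Y \<subseteq> ground M\<close> by (meson bij_betw_def card_image inj_on_subset)
    ultimately show "n \<in> {card X | X. X \<subseteq> {0..<dim_col A} \<and> cols_lin_indep A X}"
      using ind by (intro CollectI exI[of _ "f ` Y"]) auto
  next
    fix n assume "n \<in> {card X | X. X \<subseteq> {0..<dim_col A} \<and> cols_lin_indep A X}"
    then obtain X where X: "X \<subseteq> {0..<dim_col A}" "cols_lin_indep A X" "n = card X" by blast
    define Y where "Y = ground M \<inter> f -` X"
    have "Y \<subseteq> ground M" by (simp add: Y_def)
    have "f ` Y = X"
    proof
      show "f ` Y \<subseteq> X" by (auto simp: Y_def)
      show "X \<subseteq> f ` Y"
      proof
        fix x assume "x \<in> X"
        then obtain y where "y \<in> ground M" "x = f y" using X(1) f by (auto simp: bij_betw_def)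
        then show "x \<in> f ` Y" using \<open>x \<in> X\<close> by (auto simp: Y_def)
      qed
    qed
    moreover have "card (f ` Y) = card Y"
      using f \<open>Y \<subseteq> ground M\<close> by (meson bij_betw_def card_image inj_on_subset)
    ultimately show "n \<in> {card Y | Y. Y \<subseteq> ground M \<and> indep M Y}"
      using X \<open>Y \<subseteq> ground M\<close> ind[OF \<open>Y \<subseteq> ground M\<close>] by (intro CollectI exI[of _ Y]) auto
  qed
  then show ?thesis by (simp add: mat_rank_def mrank_def)
qed

abbreviation U24_sum :: "(nat + nat) matroid" where
  "U24_sum \<equiv> direct_sum (uniform_matroid 2 4) (uniform_matroid 2 4)"

abbreviation U24_sum_ground :: "(nat + nat) set" where
  "U24_sum_ground \<equiv> Inl ` {0..<4} \<union> Inr ` {0..<4}"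

lemma ground_U24_sum: "ground U24_sum = U24_sum_ground"
  by (simp add: ground_def direct_sum_def uniform_matroid_def)

lemma indep_U24_sum:
  "indep U24_sum X \<longleftrightarrow> X \<subseteq> U24_sum_ground \<and> card (Inl -` X) \<le> 2 \<and> card (Inr -` X) \<le> 2"
  by (auto simp: indep_def direct_sum_def uniform_matroid_def ground_def)

lemma mrank_U24_sum:
  assumes Y: "Y \<subseteq> U24_sum_ground"
  shows "mrank U24_sum Y = min 2 (card (Inl -` Y)) + min 2 (card (Inr -` Y))"
proof -
  let ?v = "min 2 (card (Inl -` Y)) + min 2 (card (Inr -` Y))"
  have "finite Y" using finite_subset[OF Y] by simp
  then have fin: "finite (Inl -` Y)" "finite (Inr -` Y)" by (simp_all add: finite_vimageI)
  have bound: "card Z \<le> ?v" if Z: "Z \<subseteq> Y" "indep U24_sum Z" for Z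
  proof -
    have "card (Inl -` Z) \<le> card (Inl -` Y)" "card (Inr -` Z) \<le> card (Inr -` Y)"
      using Z(1) fin by (auto intro: card_mono)
    moreover have "finite Z" using Z(1) \<open>finite Y\<close> by (rule finite_subset)
    then have "card Z = card (Inl -` Z) + card (Inr -` Z)" by (rule card_vimage_Inl_Inr)
    ultimately show ?thesis using Z(2) unfolding indep_U24_sum by linarith
  qed
  obtain ZL where ZL: "ZL \<subseteq> Inl -` Y" "card ZL = min 2 (card (Inl -` Y))"
    using obtain_subset_with_card_n[of "min 2 (card (Inl -` Y))" "Inl -` Y"] by auto
  obtain ZR where ZR: "ZR \<subseteq> Inr -` Y" "card ZR = min 2 (card (Inr -` Y))"
    using obtain_subset_with_card_n[of "min 2 (card (Inr -` Y))" "Inr -` Y"] by auto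
  let ?Z = "Inl ` ZL \<union> Inr ` ZR"
  have vimages: "Inl -` ?Z = ZL" "Inr -` ?Z = ZR" by auto
  have "finite ?Z" using finite_subset[OF ZL(1) fin(1)] finite_subset[OF ZR(1) fin(2)] by simp
  then have card_Z: "card ?Z = ?v" using card_vimage_Inl_Inr[of ?Z] ZL ZR by (simp only: vimages)
  have "?Z \<subseteq> Y" using ZL(1) ZR(1) by auto
  moreover have "indep U24_sum ?Z"
    unfolding indep_U24_sum vimages using order_trans[OF \<open>?Z \<subseteq> Y\<close> Y] ZL(2) ZR(2) by simp
  ultimately have attained: "?v \<in> {card Z | Z. Z \<subseteq> Y \<and> indep U24_sum Z}"
    unfolding card_Z[symmetric] by blast
  have "finite {card Z | Z. Z \<subseteq> Y \<and> indep U24_sum Z}"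
    by (rule finite_subset[of _ "card ` Pow Y"]) (use \<open>finite Y\<close> in auto)
  moreover have "y \<le> ?v" if "y \<in> {card Z | Z. Z \<subseteq> Y \<and> indep U24_sum Z}" for y
    using that bound by blast
  ultimately show ?thesis unfolding mrank_def using attained by (rule Max_eqI)
qed

lemma minor_U24_sum:
  assumes C: "C \<subseteq> U24_sum_ground"
  shows "ground (minor_of U24_sum C D) = U24_sum_ground - C - D"
    and "indep (minor_of U24_sum C D) X \<longleftrightarrow> X \<subseteq> U24_sum_ground - C - D
        \<and> card (Inl -` X) \<le> 2 - card (Inl -` C) \<and> card (Inr -` X) \<le> 2 - card (Inr -` C)"
proof -
  show "ground (minor_of U24_sum C D) = U24_sum_ground - C - D"
    using ground_U24_sum by (simp add: minor_of_def deletion_def contraction_def ground_def)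
  have "indep (minor_of U24_sum C D) X \<longleftrightarrow>
      X \<subseteq> U24_sum_ground - C - D \<and> mrank U24_sum (X \<union> C) = card X + mrank U24_sum C"
    using ground_U24_sum by (auto simp: minor_of_def deletion_def contraction_def indep_def ground_def)
  also have "\<dots> \<longleftrightarrow> X \<subseteq> U24_sum_ground - C - D
        \<and> card (Inl -` X) \<le> 2 - card (Inl -` C) \<and> card (Inr -` X) \<le> 2 - card (Inr -` C)"
  proof (cases "X \<subseteq> U24_sum_ground - C - D")
    case True
    have XC: "X \<union> C \<subseteq> U24_sum_ground" using True C by auto
    have "finite X" "finite C" using finite_subset[OF C] finite_subset[OF XC] by auto
    then have l: "card (Inl -` (X \<union> C)) = card (Inl -` X) + card (Inl -` C)"
      and r: "card (Inr -` (X \<union> C)) = card (Inr -` X) + card (Inr -` C)"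
      using True by (auto simp only: vimage_Un inj_Inl inj_Inr intro!: card_Un_disjoint finite_vimageI)
    show ?thesis
      unfolding mrank_U24_sum[OF XC] mrank_U24_sum[OF C] l r card_vimage_Inl_Inr[OF \<open>finite X\<close>]
      using True by auto
  qed auto
  finally show "indep (minor_of U24_sum C D) X \<longleftrightarrow> X \<subseteq> U24_sum_ground - C - D
        \<and> card (Inl -` X) \<le> 2 - card (Inl -` C) \<and> card (Inr -` X) \<le> 2 - card (Inr -` C)" .
qed

lemma plucker_relation:
  fixes \<alpha> \<beta> :: "nat \<Rightarrow> 'a :: comm_ring"
  defines "X i j \<equiv> \<alpha> i * \<beta> j - \<alpha> j * \<beta> i"
  shows "X 0 1 * X 2 3 - X 0 2 * X 1 3 + X 0 3 * X 1 2 = 0"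
  unfolding X_def by (simp add: algebra_simps)

text \<open>Three terms of absolute value 1 cannot sum to 0.\<close>
lemma plucker_ex_non_unit:
  fixes X :: "nat \<Rightarrow> nat \<Rightarrow> real"
  assumes "X 0 1 * X 2 3 - X 0 2 * X 1 3 + X 0 3 * X 1 2 = 0" "X 0 1 = 1"
  shows "\<exists>i<4. \<exists>j<4. i \<noteq> j \<and> \<bar>X i j\<bar> \<noteq> 1"
proof (rule ccontr)
  assume "\<not> ?thesis"
  then have "X i j = 1 \<or> X i j = -1" if "i < 4" "j < 4" "i \<noteq> j" for i j
    using that by fastforce
  from this[of 2 3] this[of 0 2] this[of 1 3] this[of 0 3] this[of 1 2] show False
    using assms by auto
qed

lemma plucker_pairs_not_2_modular:
  fixes D :: real and X Y :: "nat \<Rightarrow> nat \<Rightarrow> real"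
  assumes X: "X 0 1 * X 2 3 - X 0 2 * X 1 3 + X 0 3 * X 1 2 = 0" "X 0 1 = 1"
    and Y: "Y 0 1 * Y 2 3 - Y 0 2 * Y 1 3 + Y 0 3 * Y 1 2 = 0" "Y 0 1 = 1"
    and minors: "\<And>i j k l. i < 4 \<Longrightarrow> j < 4 \<Longrightarrow> k < 4 \<Longrightarrow> l < 4 \<Longrightarrow> i \<noteq> j \<Longrightarrow> k \<noteq> l \<Longrightarrow>
      \<bar>D * X i j * Y k l\<bar> \<in> {1, 2}"
  shows False
proof -
  obtain i j where ij: "i < 4" "j < 4" "i \<noteq> j" "\<bar>X i j\<bar> \<noteq> 1"
    using plucker_ex_non_unit[OF X] by blast
  obtain k l where kl: "k < 4" "l < 4" "k \<noteq> l" "\<bar>Y k l\<bar> \<noteq> 1"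
    using plucker_ex_non_unit[OF Y] by blast
  have D: "\<bar>D\<bar> = 1 \<or> \<bar>D\<bar> = 2" using minors[of 0 1 0 1] X(2) Y(2) by simp
  have DX: "\<bar>D\<bar> * \<bar>X i j\<bar> = 1 \<or> \<bar>D\<bar> * \<bar>X i j\<bar> = 2"
    using minors[of i j 0 1] ij Y(2) by (simp add: abs_mult)
  have DY: "\<bar>D\<bar> * \<bar>Y k l\<bar> = 1 \<or> \<bar>D\<bar> * \<bar>Y k l\<bar> = 2"
    using minors[of 0 1 k l] kl X(2) by (simp add: abs_mult)
  have DXY: "\<bar>D\<bar> * \<bar>X i j\<bar> * \<bar>Y k l\<bar> = 1 \<or> \<bar>D\<bar> * \<bar>X i j\<bar> * \<bar>Y k l\<bar> = 2"
    using minors[of i j k l] ij kl by (simp add: abs_mult)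
  from D show False
  proof
    assume "\<bar>D\<bar> = 1"
    then have "\<bar>X i j\<bar> = 2" "\<bar>Y k l\<bar> = 2" using DX DY ij kl by auto
    with DXY \<open>\<bar>D\<bar> = 1\<close> show False by simp
  next
    assume "\<bar>D\<bar> = 2"
    then have "\<bar>X i j\<bar> = 1/2" "\<bar>Y k l\<bar> = 1/2" using DX DY ij kl by auto
    with DXY \<open>\<bar>D\<bar> = 2\<close> show False by simp
  qed
qed

lemma dependent_extension_in_span:
  assumes ind: "cols_lin_indep A {p, q}" and dep: "\<not> cols_lin_indep A {p, q, s}"
    and "p \<noteq> q" "s \<noteq> p" "s \<noteq> q"
  shows "\<exists>\<alpha> \<beta>. \<forall>r<dim_row A.
    real_of_int (A $$ (r,s)) = \<alpha> * real_of_int (A $$ (r,p)) + \<beta> * real_of_int (A $$ (r,q))"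
proof -
  obtain c :: "nat \<Rightarrow> real" where
    rel: "\<And>r. r < dim_row A \<Longrightarrow>
      c p * real_of_int (A $$ (r,p)) + c q * real_of_int (A $$ (r,q)) + c s * real_of_int (A $$ (r,s)) = 0"
    and nontrivial: "c p \<noteq> 0 \<or> c q \<noteq> 0 \<or> c s \<noteq> 0"
    using dep \<open>p \<noteq> q\<close> \<open>s \<noteq> p\<close> \<open>s \<noteq> q\<close> unfolding cols_lin_indep_def by (auto simp: add.assoc)
  have "c s \<noteq> 0"
  proof
    assume "c s = 0"
    then have "\<forall>r<dim_row A. (\<Sum>j\<in>{p,q}. c j * real_of_int (A $$ (r,j))) = 0"
      using rel \<open>p \<noteq> q\<close> by auto
    then show False using ind nontrivial \<open>c s = 0\<close> unfolding cols_lin_indep_def by auto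
  qed
  have "real_of_int (A $$ (r,s))
      = (- c p / c s) * real_of_int (A $$ (r,p)) + (- c q / c s) * real_of_int (A $$ (r,q))"
    if "r < dim_row A" for r
    using rel[OF that] \<open>c s \<noteq> 0\<close> by (simp add: field_simps)
  then show ?thesis by blast
qed

lemma coordinate_det_nonzero:
  assumes ind: "cols_lin_indep A {s, s'}" and "s \<noteq> s'"
    and s: "\<forall>r<dim_row A. real_of_int (A $$ (r,s)) = \<alpha> * real_of_int (A $$ (r,p)) + \<beta> * real_of_int (A $$ (r,q))"
    and s': "\<forall>r<dim_row A. real_of_int (A $$ (r,s')) = \<alpha>' * real_of_int (A $$ (r,p)) + \<beta>' * real_of_int (A $$ (r,q))"
  shows "\<alpha> * \<beta>' - \<alpha>' * \<beta> \<noteq> 0"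
proof
  assume singular: "\<alpha> * \<beta>' - \<alpha>' * \<beta> = 0"
  obtain c c' where "c \<noteq> 0 \<or> c' \<noteq> 0" and "c * \<alpha> + c' * \<alpha>' = 0" and "c * \<beta> + c' * \<beta>' = 0"
  proof (cases "\<beta> \<noteq> 0 \<or> \<beta>' \<noteq> 0")
    case True
    then show thesis using singular by (intro that[of \<beta>' "- \<beta>"]) (auto simp: algebra_simps)
  next
    case False
    then show thesis by (cases "\<alpha> = 0") (auto intro: that[of 1 0] that[of \<alpha>' "- \<alpha>"])
  qed
  moreover have "c * real_of_int (A $$ (r,s)) + c' * real_of_int (A $$ (r,s')) = 0" if "r < dim_row A" for r
  proof -
    have "c * real_of_int (A $$ (r,s)) + c' * real_of_int (A $$ (r,s'))
      = (c * \<alpha> + c' * \<alpha>') * real_of_int (A $$ (r,p)) + (c * \<beta> + c' * \<beta>') * real_of_int (A $$ (r,q))"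
      using s s' that by (simp add: algebra_simps)
    then show ?thesis using calculation by simp
  qed
  ultimately show False
    using ind[unfolded cols_lin_indep_def, THEN spec[of _ "\<lambda>j. if j = s then c else c'"]] \<open>s \<noteq> s'\<close>
    by auto
qed

lemma cols_lin_indep_family:
  assumes "cols_lin_indep A (q ` {..<k})" "inj_on q {..<k}"
    and rel: "\<And>r. r < dim_row A \<Longrightarrow> (\<Sum>t<k. c t * real_of_int (A $$ (r, q t))) = 0"
  shows "\<forall>t<k. c t = 0"
proof -
  let ?c = "c \<circ> inv_into {..<k} q"
  have "(\<Sum>j\<in>q ` {..<k}. ?c j * real_of_int (A $$ (r, j))) = (\<Sum>t<k. c t * real_of_int (A $$ (r, q t)))"
    for r using assms(2) by (simp add: sum.reindex)
  then have "\<forall>j\<in>q ` {..<k}. ?c j = 0"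
    using assms(1)[unfolded cols_lin_indep_def, THEN spec[of _ ?c]] rel by simp
  then show ?thesis using assms(2) by auto
qed

lemma line_coordinates:
  fixes e :: "nat \<Rightarrow> nat"
  assumes ind: "cols_lin_indep A {e 0, e 1}"
    and dep: "\<And>i. 2 \<le> i \<Longrightarrow> i < 4 \<Longrightarrow> \<not> cols_lin_indep A {e 0, e 1, e i}"
    and inj: "inj_on e {..<4}"
  obtains \<alpha> \<beta> where "\<alpha> 0 = 1" "\<beta> 0 = 0" "\<alpha> 1 = 0" "\<beta> 1 = 1"
    and "\<And>i r. i < 4 \<Longrightarrow> r < dim_row A \<Longrightarrow>
      real_of_int (A $$ (r, e i)) = \<alpha> i * real_of_int (A $$ (r, e 0)) + \<beta> i * real_of_int (A $$ (r, e 1))"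
proof -
  have "\<forall>i\<in>{2,3}. \<exists>\<alpha>\<beta> :: real \<times> real. \<forall>r<dim_row A.
    real_of_int (A $$ (r, e i)) = fst \<alpha>\<beta> * real_of_int (A $$ (r, e 0)) + snd \<alpha>\<beta> * real_of_int (A $$ (r, e 1))"
  proof
    fix i :: nat assume i: "i \<in> {2,3}"
    then have "e 0 \<noteq> e 1" "e i \<noteq> e 0" "e i \<noteq> e 1" using inj by (auto dest: inj_onD)
    then show "\<exists>\<alpha>\<beta> :: real \<times> real. \<forall>r<dim_row A. real_of_int (A $$ (r, e i))
      = fst \<alpha>\<beta> * real_of_int (A $$ (r, e 0)) + snd \<alpha>\<beta> * real_of_int (A $$ (r, e 1))"
      using dependent_extension_in_span[OF ind dep[of i]] i by auto
  qed
  then obtain g where g: "\<And>i r. i \<in> {2,3} \<Longrightarrow> r < dim_row A \<Longrightarrow>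
    real_of_int (A $$ (r, e i)) = fst (g i) * real_of_int (A $$ (r, e 0)) + snd (g i) * real_of_int (A $$ (r, e 1))"
    by (metis bchoice)
  show thesis
  proof (rule that[of "\<lambda>i. if i = 0 then 1 else if i = 1 then 0 else fst (g i)"
        "\<lambda>i. if i = 0 then 0 else if i = 1 then 1 else snd (g i)"])
    fix i r :: nat assume "i < 4" "r < dim_row A"
    then show "real_of_int (A $$ (r, e i)) = (if i = 0 then 1 else if i = 1 then 0 else fst (g i)) * real_of_int (A $$ (r, e 0))
      + (if i = 0 then 0 else if i = 1 then 1 else snd (g i)) * real_of_int (A $$ (r, e 1))"
      using g[of i r] by (auto simp: eval_nat_numeral less_Suc_eq)
  qed simp_all
qed

lemma det_two_block_recombination:
  fixes G H :: "'a :: idom mat"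
  assumes G: "G \<in> carrier_mat 4 4" and H: "H \<in> carrier_mat 4 4"
    and left: "\<And>i t. i < 4 \<Longrightarrow> t < 2 \<Longrightarrow> G $$ (i,t) = x t * H $$ (i,0) + y t * H $$ (i,1)"
    and right: "\<And>i t. i < 4 \<Longrightarrow> 2 \<le> t \<Longrightarrow> t < 4 \<Longrightarrow> G $$ (i,t) = z t * H $$ (i,2) + w t * H $$ (i,3)"
  shows "det G = det H * ((x 0 * y 1 - x 1 * y 0) * (z 2 * w 3 - z 3 * w 2))"
proof -
  define T1 where "T1 = mat 2 2 (\<lambda>(s,t). if s = 0 then x t else y t)"
  define T2 where "T2 = mat 2 2 (\<lambda>(s,t). if s = 0 then z (t + 2) else w (t + 2))"
  let ?T = "four_block_mat T1 (0\<^sub>m 2 2) (0\<^sub>m 2 2) T2"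
  have T1: "T1 \<in> carrier_mat 2 2" and T2: "T2 \<in> carrier_mat 2 2" by (simp_all add: T1_def T2_def)
  then have T: "?T \<in> carrier_mat 4 4" by (intro carrier_matI) auto
  have "G = H * ?T"
  proof (rule eq_matI)
    fix i j assume "i < dim_row (H * ?T)" "j < dim_col (H * ?T)"
    then have i: "i < 4" and j: "j < 4" using H T by auto
    have "(H * ?T) $$ (i,j) = (\<Sum>s<4. H $$ (i,s) * ?T $$ (s,j))"
      using i j carrier_matD[OF H] carrier_matD[OF T] by (simp add: scalar_prod_def atLeast0LessThan)
    also have "\<dots> = H $$ (i,0) * ?T $$ (0,j) + H $$ (i,1) * ?T $$ (1,j)
        + H $$ (i,2) * ?T $$ (2,j) + H $$ (i,3) * ?T $$ (3,j)"
      by (simp add: eval_nat_numeral)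
    also have "\<dots> = G $$ (i,j)"
      using j left[OF i] right[OF i] by (auto simp: T1_def T2_def eval_nat_numeral less_Suc_eq)
    finally show "G $$ (i,j) = (H * ?T) $$ (i,j)" ..
  qed (use G H T in auto)
  then have "det G = det H * det ?T" using det_mult[OF H T] by simp
  also have "det ?T = det T1 * det T2"
    by (rule det_four_block_mat_upper_right_zero[OF T1 refl _ T2]) auto
  also have "det T1 = x 0 * y 1 - x 1 * y 0" by (subst det_2x2) (auto simp: T1_def)
  also have "det T2 = z 2 * w 3 - z 3 * w 2" by (subst det_2x2) (auto simp: T2_def eval_nat_numeral)
  finally show ?thesis .
qed

lemma delta_modular_2_nonzero_det_selection:
  assumes "delta_modular 2 A" "mat_rank A = k"
    and "inj_on \<rho> {..<k}" "\<rho> ` {..<k} \<subseteq> {..<dim_row A}"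
    and "inj_on q {..<k}" "q ` {..<k} \<subseteq> {..<dim_col A}"
    and nonzero: "det (mat k k (\<lambda>(i,t). real_of_int (A $$ (\<rho> i, q t)))) \<noteq> 0"
  shows "\<bar>det (mat k k (\<lambda>(i,t). real_of_int (A $$ (\<rho> i, q t))))\<bar> \<in> {1, 2}"
proof -
  obtain z where "\<bar>z\<bar> \<le> 2" and z: "det (mat k k (\<lambda>(i,t). real_of_int (A $$ (\<rho> i, q t)))) = of_int z"
    using delta_modular_det_selection[OF assms(1-6)] by blast
  moreover have "z \<noteq> 0" using nonzero z by simp
  ultimately have "\<bar>z\<bar> = 1 \<or> \<bar>z\<bar> = 2" by linarith
  then show ?thesis unfolding z by (metis insertI1 insertI2 of_int_1 of_int_abs of_int_numeral singletonI)
qed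

lemma U24_sum_not_in_M2: "\<not> in_M2 U24_sum"
proof
  assume "in_M2 U24_sum"
  then obtain A where dm: "delta_modular 2 A" and iso: "matroid_iso U24_sum (vector_matroid A)"
    unfolding in_M2_def by blast
  then obtain f where f: "bij_betw f U24_sum_ground {0..<dim_col A}"
    and ind: "\<And>X. X \<subseteq> U24_sum_ground \<Longrightarrow> indep U24_sum X \<longleftrightarrow> indep (vector_matroid A) (f ` X)"
    unfolding matroid_iso_def ground_U24_sum ground_vector_matroid by blast
  have rank: "mat_rank A = 4"
  proof -
    have "mat_rank A = min 2 (card (Inl -` U24_sum_ground)) + min 2 (card (Inr -` U24_sum_ground))"
      using mat_rank_eq_mrank_iso[OF iso] mrank_U24_sum[OF order_refl] by (simp only: ground_U24_sum)
    moreover have "Inl -` U24_sum_ground = {0..<4}" "Inr -` U24_sum_ground = {0..<4}" by auto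
    ultimately show ?thesis by simp
  qed
  have cols_indep: "cols_lin_indep A (f ` X) \<longleftrightarrow> indep U24_sum X" if "X \<subseteq> U24_sum_ground" for X
  proof -
    have "f ` X \<subseteq> {0..<dim_col A}" using image_mono[OF that, of f] unfolding bij_betw_imp_surj_on[OF f] .
    then show ?thesis using ind[OF that] unfolding indep_vector_matroid by blast
  qed
  define a where "a i = f (Inl i)" for i
  define c where "c i = f (Inr i)" for i
  define e :: "nat \<Rightarrow> nat \<Rightarrow> nat \<Rightarrow> nat \<Rightarrow> nat \<Rightarrow> nat + nat"
    where "e i j k l t = (if t = 0 then Inl i else if t = 1 then Inl j else if t = 2 then Inr k else Inr l)"
    for i j k l t
  have e_image: "e i j k l ` {..<4} = {Inl i, Inl j, Inr k, Inr l}" for i j k l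
    by (auto simp: e_def eval_nat_numeral less_Suc_eq image_iff)
  have sel_image: "(f \<circ> e i j k l) ` {..<4} = {a i, a j, c k, c l}" for i j k l
    unfolding image_comp[symmetric] e_image by (simp add: a_def c_def)
  have sel_inj: "inj_on (f \<circ> e i j k l) {..<4}"
    and sel_range: "(f \<circ> e i j k l) ` {..<4} \<subseteq> {..<dim_col A}"
    and sel_indep: "cols_lin_indep A ((f \<circ> e i j k l) ` {..<4})"
    if "i < 4" "j < 4" "k < 4" "l < 4" "i \<noteq> j" "k \<noteq> l" for i j k l
  proof -
    have vl: "Inl -` {Inl i, Inl j, Inr k, Inr l} = {i, j}"
      and vr: "Inr -` {Inl i, Inl j, Inr k, Inr l} = {k, l}" by auto
    have sub: "e i j k l ` {..<4} \<subseteq> U24_sum_ground" using that by (auto simp: e_image)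
    have "inj_on (e i j k l) {..<4}"
      using that by (auto simp: inj_on_def e_def eval_nat_numeral less_Suc_eq)
    then show "inj_on (f \<circ> e i j k l) {..<4}"
      using f sub by (auto simp: bij_betw_def intro: comp_inj_on inj_on_subset)
    show "(f \<circ> e i j k l) ` {..<4} \<subseteq> {..<dim_col A}"
      using image_mono[OF sub, of f] unfolding bij_betw_imp_surj_on[OF f] image_comp by auto
    have "indep U24_sum (e i j k l ` {..<4})"
      using sub unfolding e_image indep_U24_sum vl vr by (simp add: card_insert_if)
    then show "cols_lin_indep A ((f \<circ> e i j k l) ` {..<4})"
      using cols_indep[OF sub] by (simp add: image_comp)
  qed
  have line_a: "\<not> cols_lin_indep A {a 0, a 1, a i}" and line_c: "\<not> cols_lin_indep A {c 0, c 1, c i}"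
    if "2 \<le> i" "i < 4" for i
  proof -
    have vl: "Inl -` {Inl 0, Inl 1, Inl i} = {0, 1, i}"
      and vr: "Inr -` {Inr 0, Inr 1, Inr i} = {0, 1, i}" by auto
    have sub_l: "{Inl 0, Inl 1, Inl i} \<subseteq> U24_sum_ground"
      and sub_r: "{Inr 0, Inr 1, Inr i} \<subseteq> U24_sum_ground" using that by auto
    have "\<not> indep U24_sum {Inl 0, Inl 1, Inl i}" "\<not> indep U24_sum {Inr 0, Inr 1, Inr i}"
      using that unfolding indep_U24_sum vl vr by simp_all
    then show "\<not> cols_lin_indep A {a 0, a 1, a i}" "\<not> cols_lin_indep A {c 0, c 1, c i}"
      using cols_indep[OF sub_l] cols_indep[OF sub_r] by (simp_all add: a_def c_def)
  qed
  have inj_a: "inj_on a {..<4}" and inj_c: "inj_on c {..<4}"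
  proof (rule_tac[!] inj_onI)
    fix x y :: nat assume "x \<in> {..<4}" "y \<in> {..<4}"
    then show "a x = a y \<Longrightarrow> x = y" "c x = c y \<Longrightarrow> x = y"
      using inj_onD[OF bij_betw_imp_inj_on[OF f], of "Inl x" "Inl y"]
        inj_onD[OF bij_betw_imp_inj_on[OF f], of "Inr x" "Inr y"] by (auto simp: a_def c_def)
  qed
  have "cols_lin_indep A {a 0, a 1, c 0, c 1}" using sel_indep[of 0 1 0 1, unfolded sel_image] by simp
  then have indep_a: "cols_lin_indep A {a 0, a 1}" and indep_c: "cols_lin_indep A {c 0, c 1}"
    by (rule cols_lin_indep_subset; simp)+
  obtain \<alpha> \<beta> where "\<alpha> 0 = 1" "\<beta> 0 = 0" "\<alpha> 1 = 0" "\<beta> 1 = 1"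
    and coords_a: "\<And>i r. i < 4 \<Longrightarrow> r < dim_row A \<Longrightarrow>
      real_of_int (A $$ (r, a i)) = \<alpha> i * real_of_int (A $$ (r, a 0)) + \<beta> i * real_of_int (A $$ (r, a 1))"
    using line_coordinates[OF indep_a line_a inj_a] by blast
  obtain \<gamma> \<delta> where "\<gamma> 0 = 1" "\<delta> 0 = 0" "\<gamma> 1 = 0" "\<delta> 1 = 1"
    and coords_c: "\<And>i r. i < 4 \<Longrightarrow> r < dim_row A \<Longrightarrow>
      real_of_int (A $$ (r, c i)) = \<gamma> i * real_of_int (A $$ (r, c 0)) + \<delta> i * real_of_int (A $$ (r, c 1))"
    using line_coordinates[OF indep_c line_c inj_c] by blast
  define X where "X i j = \<alpha> i * \<beta> j - \<alpha> j * \<beta> i" for i j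
  define Y where "Y k l = \<gamma> k * \<delta> l - \<gamma> l * \<delta> k" for k l
  have "\<forall>t<4. x t = 0" if "\<And>r. r < dim_row A \<Longrightarrow> (\<Sum>t<4. x t * real_of_int (A $$ (r, (f \<circ> e 0 1 0 1) t))) = 0"
    for x
    using cols_lin_indep_family[OF sel_indep[of 0 1 0 1] sel_inj[of 0 1 0 1] that] by simp
  then obtain \<rho> where \<rho>: "inj_on \<rho> {..<4}" "\<rho> ` {..<4} \<subseteq> {..<dim_row A}"
    and D: "det (mat 4 4 (\<lambda>(r,t). real_of_int (A $$ (\<rho> r, (f \<circ> e 0 1 0 1) t)))) \<noteq> 0"
    using ex_nonsingular_row_selection[where m = "dim_row A" and k = 4
        and v = "\<lambda>t r. real_of_int (A $$ (r, (f \<circ> e 0 1 0 1) t))"]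
    by auto
  define D where "D = det (mat 4 4 (\<lambda>(r,t). real_of_int (A $$ (\<rho> r, (f \<circ> e 0 1 0 1) t))))"
  have minors: "\<bar>D * X i j * Y k l\<bar> \<in> {1, 2}"
    if ijkl: "i < 4" "j < 4" "k < 4" "l < 4" "i \<noteq> j" "k \<noteq> l" for i j k l
  proof -
    let ?G = "mat 4 4 (\<lambda>(r,t). real_of_int (A $$ (\<rho> r, (f \<circ> e i j k l) t)))"
    let ?H = "mat 4 4 (\<lambda>(r,t). real_of_int (A $$ (\<rho> r, (f \<circ> e 0 1 0 1) t)))"
    define x where "x t = \<alpha> (if t = 0 then i else j)" for t :: nat
    define y where "y t = \<beta> (if t = 0 then i else j)" for t :: nat
    define z where "z t = \<gamma> (if t = 2 then k else l)" for t :: nat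
    define w where "w t = \<delta> (if t = 2 then k else l)" for t :: nat
    have row: "\<rho> r < dim_row A" if "r < 4" for r using \<rho>(2) that by auto
    have "det ?G = det ?H * ((x 0 * y 1 - x 1 * y 0) * (z 2 * w 3 - z 3 * w 2))"
    proof (rule det_two_block_recombination)
      fix r t :: nat assume r: "r < 4"
      show "?G $$ (r,t) = x t * ?H $$ (r,0) + y t * ?H $$ (r,1)" if "t < 2"
        using coords_a[OF _ row[OF r], of "if t = 0 then i else j"] ijkl r that
        by (cases "t = 0") (auto simp: x_def y_def e_def a_def)
      show "?G $$ (r,t) = z t * ?H $$ (r,2) + w t * ?H $$ (r,3)" if "2 \<le> t" "t < 4"
        using coords_c[OF _ row[OF r], of "if t = 2 then k else l"] ijkl r that
        by (cases "t = 2") (auto simp: z_def w_def e_def c_def)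
    qed auto
    also have "\<dots> = D * X i j * Y k l" by (simp add: D_def X_def Y_def x_def y_def z_def w_def)
    finally have G: "det ?G = D * X i j * Y k l" .
    have indep_ij: "cols_lin_indep A {a i, a j}" and indep_kl: "cols_lin_indep A {c k, c l}"
      using sel_indep[OF ijkl, unfolded sel_image] by (rule cols_lin_indep_subset; simp)+
    have "a i \<noteq> a j" "c k \<noteq> c l" using inj_a inj_c ijkl by (auto dest: inj_onD)
    then have "X i j \<noteq> 0" "Y k l \<noteq> 0" unfolding X_def Y_def
      using coordinate_det_nonzero[OF indep_ij] coordinate_det_nonzero[OF indep_kl]
        coords_a[OF ijkl(1)] coords_a[OF ijkl(2)] coords_c[OF ijkl(3)] coords_c[OF ijkl(4)] by blast+
    then have "det ?G \<noteq> 0" using G D by (simp add: D_def)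
    then show ?thesis
      using delta_modular_2_nonzero_det_selection[OF dm rank \<rho> sel_inj[OF ijkl] sel_range[OF ijkl]] G by simp
  qed
  have X01: "X 0 1 = 1" and Y01: "Y 0 1 = 1" using \<open>\<alpha> 0 = 1\<close> \<open>\<beta> 1 = 1\<close> \<open>\<alpha> 1 = 0\<close> \<open>\<beta> 0 = 0\<close>
    \<open>\<gamma> 0 = 1\<close> \<open>\<delta> 1 = 1\<close> \<open>\<gamma> 1 = 0\<close> \<open>\<delta> 0 = 0\<close> by (simp_all add: X_def Y_def)
  have PX: "X 0 1 * X 2 3 - X 0 2 * X 1 3 + X 0 3 * X 1 2 = 0"
    and PY: "Y 0 1 * Y 2 3 - Y 0 2 * Y 1 3 + Y 0 3 * Y 1 2 = 0"
    unfolding X_def Y_def by (rule plucker_relation)+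
  show False using minors by (rule plucker_pairs_not_2_modular[OF PX X01 PY Y01])
qed

lemma cols_lin_indep_card_le_dim_row:
  assumes "finite Z" "cols_lin_indep A Z"
  shows "card Z \<le> dim_row A"
proof -
  have pick: "bij_betw (pick Z) {..<card Z} Z" by (rule bij_betw_pick[OF assms(1)])
  then have "pick Z ` {..<card Z} = Z" "inj_on (pick Z) {..<card Z}" by (auto simp: bij_betw_def)
  then have "\<forall>t<card Z. c t = 0"
    if "\<And>r. r < dim_row A \<Longrightarrow> (\<Sum>t<card Z. c t * real_of_int (A $$ (r, pick Z t))) = 0" for c
    using cols_lin_indep_family[of A "pick Z" "card Z" c] assms(2) that by simp
  then obtain \<rho> where "inj_on \<rho> {..<card Z}" "\<rho> ` {..<card Z} \<subseteq> {..<dim_row A}"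
    using ex_nonsingular_row_selection[where m = "dim_row A" and k = "card Z"
        and v = "\<lambda>t r. real_of_int (A $$ (r, pick Z t))"] by blast
  then show ?thesis using card_inj_on_le[of \<rho> "{..<card Z}" "{..<dim_row A}"] by simp
qed

lemma cols_lin_indep_if_det_selection:
  assumes \<rho>: "\<rho> ` {..<k} \<subseteq> {..<dim_row A}" and q: "inj_on q {..<k}"
    and det: "det (mat k k (\<lambda>(i,t). real_of_int (A $$ (\<rho> i, q t)))) \<noteq> 0"
  shows "cols_lin_indep A (q ` {..<k})"
  unfolding cols_lin_indep_def
proof (intro allI impI)
  fix c :: "nat \<Rightarrow> real"
  assume rel: "\<forall>i<dim_row A. (\<Sum>j\<in>q ` {..<k}. c j * real_of_int (A $$ (i, j))) = 0"
  let ?M = "mat k k (\<lambda>(i,t). real_of_int (A $$ (\<rho> i, q t)))"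
  have M: "?M \<in> carrier_mat k k" by simp
  have "?M *\<^sub>v vec k (c \<circ> q) = 0\<^sub>v k"
  proof (rule eq_vecI)
    fix i assume "i < dim_vec (0\<^sub>v k)"
    then have "i < k" by simp
    then have "(?M *\<^sub>v vec k (c \<circ> q)) $ i = (\<Sum>j\<in>q ` {..<k}. c j * real_of_int (A $$ (\<rho> i, j)))"
      using q by (simp add: scalar_prod_def sum.reindex atLeast0LessThan mult.commute)
    also have "\<dots> = 0" using rel \<rho> \<open>i < k\<close> by auto
    finally show "(?M *\<^sub>v vec k (c \<circ> q)) $ i = 0\<^sub>v k $ i" using \<open>i < k\<close> by simp
  qed simp
  then have "vec k (c \<circ> q) = 0\<^sub>v k"
    using det det_0_iff_vec_prod_zero[OF M] vec_carrier[of k "c \<circ> q"] by blast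
  then show "\<forall>j\<in>q ` {..<k}. c j = 0" by (auto simp: vec_eq_iff)
qed

text \<open>Columns of \<open>[1 0 1 1; 0 1 1 -1]\<close> for \<open>r = 2\<close> and of the all-ones row for \<open>r = 1\<close>;
  the first \<open>n \<le> 4\<close> of them represent the uniform matroid \<open>U\<^sub>r\<^sub>,\<^sub>n\<close>.\<close>
definition urep :: "nat \<Rightarrow> nat \<Rightarrow> nat \<Rightarrow> int" where
  "urep r i j = (if r = 2 then (if i = 0 then (if j = 1 then 0 else 1)
     else (if j = 0 then 0 else if j = 3 then -1 else 1)) else 1)"

definition urep_mat :: "nat \<Rightarrow> nat \<Rightarrow> int mat" where
  "urep_mat r n = mat r n (\<lambda>(i,j). urep r i j)"

lemma card_le_2_cases:
  assumes "finite Z" "card Z \<le> 2"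
  obtains (empty) "Z = {}" | (singleton) p where "Z = {p}"
    | (pair) p q where "p < q" "Z = {p, q :: 'a :: linorder}"
proof (cases "card Z")
  case 0 then show thesis using assms that(1) by simp
next
  case (Suc k)
  then show thesis
  proof (cases k)
    case 0
    then have "card Z = 1" using Suc by simp
    then show thesis using that(2) by (metis card_1_singletonE)
  next
    case (Suc k')
    then have "card Z = 2" using assms \<open>card Z = Suc k\<close> by simp
    then obtain x y where "Z = {x, y}" "x \<noteq> y" unfolding card_2_iff by blast
    then show thesis using that(3)[of "min x y" "max x y"] by (cases "x < y") (auto simp: insert_commute)
  qed
qed

lemma cols_lin_indep_urep_mat_iff:
  assumes Z: "Z \<subseteq> {0..<n}" and "n \<le> 4" "r \<le> 2"
  shows "cols_lin_indep (urep_mat r n) Z \<longleftrightarrow> card Z \<le> r"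
proof
  have "finite Z" using Z finite_subset by blast
  then show "cols_lin_indep (urep_mat r n) Z \<Longrightarrow> card Z \<le> r"
    using cols_lin_indep_card_le_dim_row by (fastforce simp: urep_mat_def)
  assume "card Z \<le> r"
  then have "card Z \<le> 2" using assms(3) by simp
  with \<open>finite Z\<close> show "cols_lin_indep (urep_mat r n) Z"
  proof (cases rule: card_le_2_cases)
    case empty
    show ?thesis using empty unfolding cols_lin_indep_def by simp
  next
    case (singleton p)
    then have "1 \<le> r" using \<open>card Z \<le> r\<close> by simp
    define i0 where "i0 = (if r = 2 \<and> p = 1 then 1 else 0 :: nat)"
    have "cols_lin_indep (urep_mat r n) ((\<lambda>_::nat. p) ` {..<1})"
    proof (rule cols_lin_indep_if_det_selection[where \<rho> = "\<lambda>_. i0"])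
      show "det (mat 1 1 (\<lambda>(i,t). real_of_int (urep_mat r n $$ (i0, p)))) \<noteq> 0"
        using singleton Z \<open>1 \<le> r\<close> by (subst det_single) (auto simp: urep_mat_def urep_def i0_def)
    qed (use \<open>1 \<le> r\<close> in \<open>auto simp: urep_mat_def i0_def inj_on_def\<close>)
    moreover have "(\<lambda>_::nat. p) ` {..<1} = {p}" by auto
    ultimately show ?thesis using singleton by simp
  next
    case (pair p q)
    then have "r = 2" using \<open>card Z \<le> r\<close> assms(3) by simp
    define sel where "sel t = (if t = 0 then p else q)" for t :: nat
    have "p < 4" "q < 4" using pair Z assms(2) by auto
    have "cols_lin_indep (urep_mat r n) (sel ` {..<2})"
    proof (rule cols_lin_indep_if_det_selection[where \<rho> = id])
      show "inj_on sel {..<2}" using pair by (auto simp: inj_on_def sel_def)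
      have "urep 2 0 p * urep 2 1 q - urep 2 0 q * urep 2 1 p \<noteq> 0"
        using \<open>p < 4\<close> \<open>q < 4\<close> \<open>p < q\<close> by (auto simp: urep_def eval_nat_numeral less_Suc_eq)
      then have "real_of_int (urep 2 0 p * urep 2 1 q - urep 2 0 q * urep 2 1 p) \<noteq> 0"
        by (metis of_int_eq_0_iff)
      then show "det (mat 2 2 (\<lambda>(i,t). real_of_int (urep_mat r n $$ (id i, sel t)))) \<noteq> 0"
        using pair Z \<open>r = 2\<close> by (subst det_2x2) (auto simp: urep_mat_def sel_def)
    qed (use \<open>r = 2\<close> in \<open>auto simp: urep_mat_def\<close>)
    moreover have "sel ` {..<2} = {p, q}" by (auto simp: sel_def eval_nat_numeral less_Suc_eq image_iff)
    ultimately show ?thesis using pair by simp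
  qed
qed

lemma four_block_diag_row_sums:
  fixes B C :: "int mat"
  assumes B: "B \<in> carrier_mat m1 n1" and C: "C \<in> carrier_mat m2 n2" and Y: "Y \<subseteq> {0..<n1 + n2}"
  defines "K \<equiv> four_block_mat B (0\<^sub>m m1 n2) (0\<^sub>m m2 n1) C"
  shows "i < m1 \<Longrightarrow> (\<Sum>j\<in>Y. c j * real_of_int (K $$ (i, j)))
      = (\<Sum>j\<in>Y \<inter> {..<n1}. c j * real_of_int (B $$ (i, j)))"
    and "i < m2 \<Longrightarrow> (\<Sum>j\<in>Y. c j * real_of_int (K $$ (m1 + i, j)))
      = (\<Sum>j\<in>(\<lambda>j. j - n1) ` (Y \<inter> {n1..}). c (j + n1) * real_of_int (C $$ (i, j)))"
proof -
  have "finite Y" using Y finite_subset by blast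
  have split: "(\<Sum>j\<in>Y. g j) = (\<Sum>j\<in>Y \<inter> {..<n1}. g j) + (\<Sum>j\<in>Y \<inter> {n1..}. g j)" for g :: "nat \<Rightarrow> real"
    using \<open>finite Y\<close> by (subst sum.union_disjoint[symmetric]) (auto intro: sum.cong)
  have entry: "K $$ (i, j) = (if j < n1 then (if i < m1 then B $$ (i, j) else 0)
      else (if i < m1 then 0 else C $$ (i - m1, j - n1)))" if "i < m1 + m2" "j \<in> Y" for i j
    using that B C Y unfolding K_def by auto
  show "(\<Sum>j\<in>Y. c j * real_of_int (K $$ (i, j))) = (\<Sum>j\<in>Y \<inter> {..<n1}. c j * real_of_int (B $$ (i, j)))"
    if "i < m1"
    using that by (simp add: split entry)
  assume "i < m2"
  have "(\<Sum>j\<in>Y. c j * real_of_int (K $$ (m1 + i, j))) = (\<Sum>j\<in>Y \<inter> {n1..}. c j * real_of_int (C $$ (i, j - n1)))"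
    using \<open>i < m2\<close> by (simp add: split entry)
  also have "\<dots> = (\<Sum>j\<in>(\<lambda>j. j - n1) ` (Y \<inter> {n1..}). c (j + n1) * real_of_int (C $$ (i, j)))"
    by (subst sum.reindex) (auto simp: inj_on_def intro!: sum.cong)
  finally show "(\<Sum>j\<in>Y. c j * real_of_int (K $$ (m1 + i, j)))
      = (\<Sum>j\<in>(\<lambda>j. j - n1) ` (Y \<inter> {n1..}). c (j + n1) * real_of_int (C $$ (i, j)))" .
qed

lemma cols_lin_indep_four_block_diag:
  fixes B C :: "int mat"
  assumes B: "B \<in> carrier_mat m1 n1" and C: "C \<in> carrier_mat m2 n2" and Y: "Y \<subseteq> {0..<n1 + n2}"
  shows "cols_lin_indep (four_block_mat B (0\<^sub>m m1 n2) (0\<^sub>m m2 n1) C) Y \<longleftrightarrow>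
    cols_lin_indep B (Y \<inter> {..<n1}) \<and> cols_lin_indep C ((\<lambda>j. j - n1) ` (Y \<inter> {n1..}))"
    (is "cols_lin_indep ?K Y \<longleftrightarrow> cols_lin_indep B ?L \<and> cols_lin_indep C ?R")
proof -
  note sums = four_block_diag_row_sums[OF B C Y]
  have rows: "dim_row ?K = m1 + m2" "dim_row B = m1" "dim_row C = m2" using B C by auto
  have K_rel: "\<forall>i<dim_row ?K. (\<Sum>j\<in>Y. c j * real_of_int (?K $$ (i, j))) = 0"
    if L: "\<forall>i<m1. (\<Sum>j\<in>?L. c j * real_of_int (B $$ (i, j))) = 0"
      and R: "\<forall>i<m2. (\<Sum>j\<in>?R. c (j + n1) * real_of_int (C $$ (i, j))) = 0" for c
  proof (intro allI impI)
    fix i assume "i < dim_row ?K"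
    then consider "i < m1" | i' where "i' < m2" "i = m1 + i'"
      using rows by (metis add_diff_inverse_nat nat_add_left_cancel_less)
    then show "(\<Sum>j\<in>Y. c j * real_of_int (?K $$ (i, j))) = 0"
    proof cases
      case 1
      then show ?thesis using L sums(1)[of i c] by simp
    next
      case (2 i')
      then show ?thesis using R sums(2)[of i' c] by simp
    qed
  qed
  show ?thesis
  proof (intro iffI conjI)
    assume K: "cols_lin_indep ?K Y"
    show "cols_lin_indep B ?L" unfolding cols_lin_indep_def
    proof (intro allI impI)
      fix c :: "nat \<Rightarrow> real" assume rel: "\<forall>i<dim_row B. (\<Sum>j\<in>?L. c j * real_of_int (B $$ (i, j))) = 0"
      let ?c = "\<lambda>j. if j < n1 then c j else 0"
      have "(\<Sum>j\<in>?L. ?c j * real_of_int (B $$ (i, j))) = (\<Sum>j\<in>?L. c j * real_of_int (B $$ (i, j)))" for i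
        by (rule sum.cong) auto
      then have "\<forall>i<dim_row ?K. (\<Sum>j\<in>Y. ?c j * real_of_int (?K $$ (i, j))) = 0"
        using rel rows by (intro K_rel) simp_all
      then have "\<forall>j\<in>Y. ?c j = 0" by (rule mp[OF spec[OF K[unfolded cols_lin_indep_def], of ?c]])
      then show "\<forall>j\<in>?L. c j = 0" by auto
    qed
    show "cols_lin_indep C ?R" unfolding cols_lin_indep_def
    proof (intro allI impI)
      fix c :: "nat \<Rightarrow> real" assume rel: "\<forall>i<dim_row C. (\<Sum>j\<in>?R. c j * real_of_int (C $$ (i, j))) = 0"
      let ?c = "\<lambda>j. if j < n1 then 0 else c (j - n1)"
      have "(\<Sum>j\<in>?L. ?c j * real_of_int (B $$ (i, j))) = 0" for i
        by (rule sum.neutral) auto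
      then have "\<forall>i<dim_row ?K. (\<Sum>j\<in>Y. ?c j * real_of_int (?K $$ (i, j))) = 0"
        using rel rows by (intro K_rel) simp_all
      then have "\<forall>j\<in>Y. ?c j = 0" by (rule mp[OF spec[OF K[unfolded cols_lin_indep_def], of ?c]])
      then show "\<forall>j\<in>?R. c j = 0" by auto
    qed
  next
    assume BC: "cols_lin_indep B ?L \<and> cols_lin_indep C ?R"
    show "cols_lin_indep ?K Y" unfolding cols_lin_indep_def
    proof (intro allI impI)
      fix c :: "nat \<Rightarrow> real" assume rel: "\<forall>i<dim_row ?K. (\<Sum>j\<in>Y. c j * real_of_int (?K $$ (i, j))) = 0"
      have "\<forall>i<dim_row B. (\<Sum>j\<in>?L. c j * real_of_int (B $$ (i, j))) = 0"
        using rel sums(1)[of _ c] rows by simp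
      then have L: "\<forall>j\<in>?L. c j = 0" using BC unfolding cols_lin_indep_def by blast
      have "\<forall>i<dim_row C. (\<Sum>j\<in>?R. c (j + n1) * real_of_int (C $$ (i, j))) = 0"
      proof (intro allI impI)
        fix i assume "i < dim_row C"
        then show "(\<Sum>j\<in>?R. c (j + n1) * real_of_int (C $$ (i, j))) = 0"
          using rel[rule_format, of "m1 + i"] sums(2)[of i c] rows by simp
      qed
      then have R: "\<forall>j\<in>?R. c (j + n1) = 0"
        by (rule mp[OF spec[OF BC[THEN conjunct2, unfolded cols_lin_indep_def], of "\<lambda>j. c (j + n1)"]])
      show "\<forall>j\<in>Y. c j = 0"
      proof
        fix j assume "j \<in> Y"
        show "c j = 0"
        proof (cases "j < n1")
          case True
          then show ?thesis using L \<open>j \<in> Y\<close> by simp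
        next
          case False
          then have "j - n1 \<in> ?R" using \<open>j \<in> Y\<close> by auto
          then have "c (j - n1 + n1) = 0" using R by blast
          then show ?thesis using False by simp
        qed
      qed
    qed
  qed
qed

definition urep_block :: "nat \<Rightarrow> nat \<Rightarrow> nat \<Rightarrow> nat \<Rightarrow> int mat" where
  "urep_block rL nL rR nR = four_block_mat (urep_mat rL nL) (0\<^sub>m rL nR) (0\<^sub>m rR nL) (urep_mat rR nR)"

lemma dim_urep_block [simp]:
  "dim_row (urep_block rL nL rR nR) = rL + rR" "dim_col (urep_block rL nL rR nR) = nL + nR"
  by (simp_all add: urep_block_def urep_mat_def)

lemma index_urep_block:
  assumes "i < rL + rR" "j < nL + nR"
  shows "urep_block rL nL rR nR $$ (i,j) = (if j < nL then (if i < rL then urep rL i j else 0)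
    else (if i < rL then 0 else urep rR (i - rL) (j - nL)))"
  using assms by (simp add: urep_block_def urep_mat_def)

lemma card_split_lessThan_atLeast:
  fixes Y :: "nat set"
  assumes "finite Y"
  shows "card Y = card (Y \<inter> {..<b}) + card (Y \<inter> {b..})"
proof -
  have "Y = (Y \<inter> {..<b}) \<union> (Y \<inter> {b..})" by auto
  then show ?thesis using assms by (metis card_Un_disjoint finite_Int disjoint_iff IntD2 atLeast_iff
      lessThan_iff not_le)
qed

lemma cols_lin_indep_urep_block_iff:
  assumes Y: "Y \<subseteq> {0..<nL + nR}" and r: "rL \<le> 2" "rR \<le> 2" and n: "nL \<le> 4" "nR \<le> 4"
  shows "cols_lin_indep (urep_block rL nL rR nR) Y \<longleftrightarrow> card (Y \<inter> {..<nL}) \<le> rL \<and> card (Y \<inter> {nL..}) \<le> rR"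
proof -
  have "urep_mat rL nL \<in> carrier_mat rL nL" "urep_mat rR nR \<in> carrier_mat rR nR"
    by (simp_all add: urep_mat_def)
  note block = cols_lin_indep_four_block_diag[OF this Y]
  have "(\<lambda>j. j - nL) ` (Y \<inter> {nL..}) \<subseteq> {0..<nR}" using Y by auto
  moreover have "card ((\<lambda>j. j - nL) ` (Y \<inter> {nL..})) = card (Y \<inter> {nL..})"
    by (rule card_image) (auto simp: inj_on_def)
  moreover have "Y \<inter> {..<nL} \<subseteq> {0..<nL}" by auto
  ultimately show ?thesis
    unfolding urep_block_def block using cols_lin_indep_urep_mat_iff r n by simp
qed

lemma mat_rank_urep_block:
  assumes r: "rL \<le> 2" "rR \<le> 2" and n: "nL \<le> 4" "nR \<le> 4" and rn: "rL \<le> nL" "rR \<le> nR"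
  shows "mat_rank (urep_block rL nL rR nR) = rL + rR"
proof -
  let ?A = "urep_block rL nL rR nR"
  let ?S = "{card X | X. X \<subseteq> {0..<nL + nR} \<and> cols_lin_indep ?A X}"
  have "finite ?S" by (rule finite_subset[of _ "card ` Pow {0..<nL + nR}"]) auto
  moreover have "x \<le> rL + rR" if "x \<in> ?S" for x
  proof -
    obtain X where X: "X \<subseteq> {0..<nL + nR}" "cols_lin_indep ?A X" "x = card X" using \<open>x \<in> ?S\<close> by blast
    then have "finite X" using finite_subset by blast
    then show ?thesis
      using X cols_lin_indep_urep_block_iff[OF X(1) r n] card_split_lessThan_atLeast[of X nL] by simp
  qed
  moreover have "rL + rR \<in> ?S"
  proof -
    let ?Y = "{0..<rL} \<union> {nL..<nL + rR}"
    have Y: "?Y \<subseteq> {0..<nL + nR}" "?Y \<inter> {..<nL} = {0..<rL}" "?Y \<inter> {nL..} = {nL..<nL + rR}"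
      using rn by auto
    then have "cols_lin_indep ?A ?Y" "card ?Y = rL + rR"
      using cols_lin_indep_urep_block_iff[OF Y(1) r n] card_split_lessThan_atLeast[of ?Y nL] by simp_all
    then show ?thesis using Y(1) unfolding mem_Collect_eq by (intro exI[of _ ?Y]) simp
  qed
  ultimately show ?thesis unfolding mat_rank_def by (intro Max_eqI) auto
qed

text \<open>Only the full block \<open>U\<^sub>2\<^sub>,\<^sub>4\<close> has a maximal minor of absolute value 2, namely the
  one on columns 2 and 3.\<close>
lemma det_urep_bound:
  assumes r: "r \<le> 2" and mono: "r = 2 \<Longrightarrow> p 0 < p 1" and p: "\<And>t. t < r \<Longrightarrow> p t < n" and n: "n \<le> 4"
  shows "\<bar>det (mat r r (\<lambda>(i,t). urep r i (p t)))\<bar> \<le> (if r = 2 \<and> n = 4 then 2 else 1)"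
proof -
  consider "r = 0" | "r = 1" | "r = 2" using r by linarith
  then show ?thesis
  proof cases
    case 1
    then show ?thesis by simp
  next
    case 2
    then show ?thesis by (subst det_single) (auto simp: urep_def)
  next
    case 3
    then have "p 0 < p 1" "p 1 < n" using mono p[of 1] by auto
    then have "\<bar>urep 2 0 (p 0) * urep 2 1 (p 1) - urep 2 0 (p 1) * urep 2 1 (p 0)\<bar>
        \<le> (if n = 4 then 2 else 1)"
      using n by (auto simp: urep_def eval_nat_numeral less_Suc_eq)
    then show ?thesis using 3 by (subst det_2x2) auto
  qed
qed

lemma pick_atLeast0_lessThan: "i < r \<Longrightarrow> pick {0..<r} i = i"
  using pick_card_in_set[of i "{0..<r}"] by (simp add: Collect_conj_eq Int_absorb1 atLeast0LessThan
      lessThan_def[symmetric])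

lemma pick_less_iff:
  assumes J: "finite J" and t: "t < card J"
  shows "pick J t < b \<longleftrightarrow> t < card {a \<in> J. a < b}"
proof
  assume "pick J t < b"
  then have "{a \<in> J. a < pick J t} \<subset> {a \<in> J. a < b}" using pick_in_set_le[OF t] by auto
  then have "card {a \<in> J. a < pick J t} < card {a \<in> J. a < b}" by (rule psubset_card_mono[rotated]) (use J in auto)
  then show "t < card {a \<in> J. a < b}" using card_pick_le[OF t] by simp
next
  assume "t < card {a \<in> J. a < b}"
  show "pick J t < b"
  proof (rule ccontr)
    assume "\<not> pick J t < b"
    then have "{a \<in> J. a < b} \<subseteq> {a \<in> J. a < pick J t}" by auto
    then have "card {a \<in> J. a < b} \<le> card {a \<in> J. a < pick J t}" by (rule card_mono[rotated]) (use J in auto)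
    then show False using card_pick_le[OF t] \<open>t < card {a \<in> J. a < b}\<close> by simp
  qed
qed

lemma det_submatrix_urep_block_bound:
  assumes r: "rL \<le> 2" "rR \<le> 2" and n: "nL \<le> 4" "nR \<le> 4"
    and J: "J \<subseteq> {0..<nL + nR}" and cL: "card (J \<inter> {..<nL}) = rL" and cR: "card (J \<inter> {nL..}) = rR"
  shows "\<bar>det (submatrix (urep_block rL nL rR nR) {0..<rL + rR} J)\<bar>
    \<le> (if rL = 2 \<and> nL = 4 then 2 else 1) * (if rR = 2 \<and> nR = 4 then 2 else 1)"
proof -
  let ?A = "urep_block rL nL rR nR" and ?r = "rL + rR"
  have "finite J" using J finite_subset by blast
  then have cJ: "card J = ?r" using card_split_lessThan_atLeast[of J nL] cL cR by simp
  have left: "pick J t < nL \<longleftrightarrow> t < rL" if "t < ?r" for t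
    using pick_less_iff[OF \<open>finite J\<close>, of t nL] that cJ cL by (simp add: Collect_conj_eq lessThan_def Int_commute)
  have range: "pick J t < nL + nR" if "t < ?r" for t
    using pick_in_set_le[of t J] that cJ J by auto
  have mono: "pick J s < pick J t" if "s < t" "t < ?r" for s t
    using pick_mono_le[of t J s] that cJ by simp
  define S1 where "S1 = mat rL rL (\<lambda>(i,t). urep rL i (pick J t))"
  define S2 where "S2 = mat rR rR (\<lambda>(i,t). urep rR i (pick J (rL + t) - nL))"
  have rows: "card {i. i < dim_row ?A \<and> i \<in> {0..<?r}} = ?r" by simp
  have "{j. j < dim_col ?A \<and> j \<in> J} = J" using J by auto
  then have cols: "card {j. j < dim_col ?A \<and> j \<in> J} = ?r" using cJ by simp
  have sub: "submatrix ?A {0..<?r} J = four_block_mat S1 (0\<^sub>m rL rR) (0\<^sub>m rR rL) S2"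
  proof (rule eq_matI)
    fix i t assume "i < dim_row (four_block_mat S1 (0\<^sub>m rL rR) (0\<^sub>m rR rL) S2)"
      "t < dim_col (four_block_mat S1 (0\<^sub>m rL rR) (0\<^sub>m rR rL) S2)"
    then have i: "i < ?r" and t: "t < ?r" by (simp_all add: S1_def S2_def)
    have "submatrix ?A {0..<?r} J $$ (i,t) = ?A $$ (i, pick J t)"
      using submatrix_index[of i ?A "{0..<?r}" t J] rows cols i t pick_atLeast0_lessThan[OF i] by simp
    then show "submatrix ?A {0..<?r} J $$ (i,t) = four_block_mat S1 (0\<^sub>m rL rR) (0\<^sub>m rR rL) S2 $$ (i,t)"
      using i t left[OF t] range[OF t]
      by (cases "i < rL"; cases "t < rL") (auto simp: index_urep_block S1_def S2_def)
  qed (use rows cols in \<open>simp_all add: dim_submatrix S1_def S2_def\<close>)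
  have "det (submatrix ?A {0..<?r} J) = det S1 * det S2"
    unfolding sub by (rule det_four_block_mat_upper_right_zero) (auto simp: S1_def S2_def)
  moreover have "\<bar>det S1\<bar> \<le> (if rL = 2 \<and> nL = 4 then 2 else 1)"
    unfolding S1_def using mono[of 0 1] left by (intro det_urep_bound[OF r(1) _ _ n(1)]) auto
  moreover have "\<bar>det S2\<bar> \<le> (if rR = 2 \<and> nR = 4 then 2 else 1)"
    unfolding S2_def
  proof (rule det_urep_bound[OF r(2) _ _ n(2)])
    show "pick J (rL + 0) - nL < pick J (rL + 1) - nL" if "rR = 2"
      using mono[of rL "rL + 1"] left[of rL] that by simp
    show "pick J (rL + t) - nL < nR" if "t < rR" for t
      using left[of "rL + t"] range[of "rL + t"] that by auto
  qed
  ultimately show ?thesis by (simp add: abs_mult mult_mono')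
qed

lemma delta_modular_urep_block:
  assumes r: "rL \<le> 2" "rR \<le> 2" and n: "nL \<le> 4" "nR \<le> 4" and rn: "rL \<le> nL" "rR \<le> nR"
    and not_both_U24: "\<not> (rL = 2 \<and> nL = 4 \<and> rR = 2 \<and> nR = 4)"
  shows "delta_modular 2 (urep_block rL nL rR nR)"
  unfolding delta_modular_def mat_rank_urep_block[OF r n rn]
proof (intro allI impI, elim conjE)
  fix I J
  let ?A = "urep_block rL nL rR nR"
  assume I: "I \<subseteq> {0..<dim_row ?A}" and J: "J \<subseteq> {0..<dim_col ?A}"
    and "card I = rL + rR" "card J = rL + rR"
  then have "I = {0..<rL + rR}" by (intro card_subset_eq) auto
  show "\<bar>det (submatrix ?A I J)\<bar> \<le> 2"
  proof (cases "cols_lin_indep ?A J")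
    case False
    then show ?thesis using det_submatrix_dependent_cols[OF J False] by simp
  next
    case True
    have "finite J" using J finite_subset by blast
    then have "card (J \<inter> {..<nL}) = rL" "card (J \<inter> {nL..}) = rR"
      using True cols_lin_indep_urep_block_iff[of J] J r n card_split_lessThan_atLeast[of J nL]
        \<open>card J = rL + rR\<close> by auto
    then have "\<bar>det (submatrix ?A I J)\<bar>
      \<le> (if rL = 2 \<and> nL = 4 then 2 else 1) * (if rR = 2 \<and> nR = 4 then 2 else 1)"
      using det_submatrix_urep_block_bound[OF r n] J \<open>I = {0..<rL + rR}\<close> by simp
    then show ?thesis using not_both_U24 by (auto split: if_splits)
  qed
qed

lemma ex_bij_sum_to_interval:
  assumes "finite L" "finite R"
  obtains f where "bij_betw f (Inl ` L \<union> Inr ` R) {0..<card L + card R}"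
    and "\<And>X. X \<subseteq> Inl ` L \<union> Inr ` R \<Longrightarrow> card (f ` X \<inter> {..<card L}) = card (Inl -` X)"
    and "\<And>X. X \<subseteq> Inl ` L \<union> Inr ` R \<Longrightarrow> card (f ` X \<inter> {card L..}) = card (Inr -` X)"
proof -
  let ?nL = "card L"
  obtain gL where gL: "bij_betw gL L {0..<?nL}" using ex_bij_betw_finite_nat[OF assms(1)] by blast
  obtain gR where gR: "bij_betw gR R {0..<card R}" using ex_bij_betw_finite_nat[OF assms(2)] by blast
  have gL_less: "gL x < ?nL" if "x \<in> L" for x using gL that by (auto simp: bij_betw_def)
  define f where "f = case_sum gL (\<lambda>y. ?nL + gR y)"
  have image: "f ` X = gL ` (Inl -` X) \<union> (\<lambda>y. ?nL + gR y) ` (Inr -` X)" for X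
  proof (intro equalityI subsetI)
    fix w assume "w \<in> f ` X"
    then obtain z where "z \<in> X" "w = f z" by auto
    then show "w \<in> gL ` (Inl -` X) \<union> (\<lambda>y. ?nL + gR y) ` (Inr -` X)" by (cases z) (auto simp: f_def)
  qed (auto simp: f_def image_iff intro: rev_bexI)
  have left: "f ` X \<inter> {..<?nL} = gL ` (Inl -` X)" and right: "f ` X \<inter> {?nL..} = (\<lambda>y. ?nL + gR y) ` (Inr -` X)"
    if "X \<subseteq> Inl ` L \<union> Inr ` R" for X
  proof -
    have "gL x < ?nL" if "Inl x \<in> X" for x using that \<open>X \<subseteq> Inl ` L \<union> Inr ` R\<close> gL_less by auto
    then show "f ` X \<inter> {..<?nL} = gL ` (Inl -` X)" "f ` X \<inter> {?nL..} = (\<lambda>y. ?nL + gR y) ` (Inr -` X)"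
      unfolding image by (auto simp: not_le[symmetric])
  qed
  have "inj_on f (Inl ` L \<union> Inr ` R)"
  proof (rule inj_onI)
    fix z z' assume "z \<in> Inl ` L \<union> Inr ` R" "z' \<in> Inl ` L \<union> Inr ` R" "f z = f z'"
    then show "z = z'"
      using gL gR by (auto simp: f_def bij_betw_def dest: inj_onD gL_less)
  qed
  moreover have "f ` (Inl ` L \<union> Inr ` R) = {0..<?nL + card R}"
  proof -
    have "Inl -` (Inl ` L \<union> Inr ` R) = L" "Inr -` (Inl ` L \<union> Inr ` R) = R" by auto
    then have "f ` (Inl ` L \<union> Inr ` R) = gL ` L \<union> (\<lambda>y. ?nL + gR y) ` R"
      unfolding image by (simp only:)
    also have "gL ` L = {0..<?nL}" using gL by (simp add: bij_betw_def)
    also have "(\<lambda>y. ?nL + gR y) ` R = (\<lambda>y. ?nL + y) ` {0..<card R}"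
      using gR by (simp add: bij_betw_def image_image[symmetric])
    finally show ?thesis by (auto simp: image_iff)
  qed
  ultimately have bij: "bij_betw f (Inl ` L \<union> Inr ` R) {0..<?nL + card R}" by (rule bij_betw_imageI)
  show thesis
  proof (rule that[OF bij])
    fix X assume X: "X \<subseteq> Inl ` L \<union> Inr ` R"
    then have "Inl -` X \<subseteq> L" "Inr -` X \<subseteq> R" by auto
    then have "inj_on gL (Inl -` X)" "inj_on gR (Inr -` X)"
      using gL gR by (auto simp: bij_betw_def intro: inj_on_subset)
    then show "card (f ` X \<inter> {..<?nL}) = card (Inl -` X)" "card (f ` X \<inter> {?nL..}) = card (Inr -` X)"
      unfolding left[OF X] right[OF X] by (auto simp: inj_on_def intro!: card_image)
  qed
qed

lemma proper_minor_U24_sum_in_M2: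
  assumes C: "C \<subseteq> U24_sum_ground" and D: "D \<subseteq> U24_sum_ground" and proper: "C \<union> D \<noteq> {}"
  shows "in_M2 (minor_of U24_sum C D)"
proof -
  define E where "E = U24_sum_ground - C - D"
  define L R where "L = Inl -` E" and "R = Inr -` E"
  define rL rR where "rL = min (2 - card (Inl -` C)) (card L)" and "rR = min (2 - card (Inr -` C)) (card R)"
  have E: "E = Inl ` L \<union> Inr ` R" unfolding E_def L_def R_def by force
  have "L \<subseteq> {0..<4}" "R \<subseteq> {0..<4}" unfolding L_def R_def E_def by auto
  then have fin: "finite L" "finite R" and n: "card L \<le> 4" "card R \<le> 4"
    using finite_subset card_mono by (metis card_atLeastLessThan diff_zero finite_atLeastLessThan)+
  have "\<not> (card L = 4 \<and> card R = 4)"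
  proof
    assume "card L = 4 \<and> card R = 4"
    then have "L = {0..<4}" "R = {0..<4}"
      using \<open>L \<subseteq> {0..<4}\<close> \<open>R \<subseteq> {0..<4}\<close> by (simp_all add: card_subset_eq)
    then have "E = U24_sum_ground" using E by simp
    then show False using C D proper by (auto simp: E_def)
  qed
  then have "\<not> (rL = 2 \<and> card L = 4 \<and> rR = 2 \<and> card R = 4)" by blast
  then have "delta_modular 2 (urep_block rL (card L) rR (card R))"
    by (rule delta_modular_urep_block[rotated 6]) (use n in \<open>auto simp: rL_def rR_def\<close>)
  moreover obtain f where f: "bij_betw f E {0..<card L + card R}"
    and card_left: "\<And>X. X \<subseteq> E \<Longrightarrow> card (f ` X \<inter> {..<card L}) = card (Inl -` X)"
    and card_right: "\<And>X. X \<subseteq> E \<Longrightarrow> card (f ` X \<inter> {card L..}) = card (Inr -` X)"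
    using ex_bij_sum_to_interval[OF fin] unfolding E[symmetric] by blast
  have "indep (minor_of U24_sum C D) X \<longleftrightarrow> indep (vector_matroid (urep_block rL (card L) rR (card R))) (f ` X)"
    if X: "X \<subseteq> E" for X
  proof -
    have "f ` X \<subseteq> {0..<card L + card R}" using f X by (auto simp: bij_betw_def)
    moreover have "card (Inl -` X) \<le> card L" "card (Inr -` X) \<le> card R"
      using X fin unfolding L_def R_def by (auto intro: card_mono)
    ultimately show ?thesis
      using X cols_lin_indep_urep_block_iff[of "f ` X" "card L" "card R" rL rR] n
      unfolding minor_U24_sum(2)[OF C] indep_vector_matroid card_left[OF X] card_right[OF X]
      by (auto simp: rL_def rR_def E_def)
  qed
  then have "matroid_iso (minor_of U24_sum C D) (vector_matroid (urep_block rL (card L) rR (card R)))"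
    unfolding matroid_iso_def minor_U24_sum(1)[OF C] ground_vector_matroid E_def[symmetric]
    using f by auto
  ultimately show ?thesis unfolding in_M2_def by blast
qed

theorem proposition4p3:
  defines "M \<equiv> direct_sum (uniform_matroid 2 4) (uniform_matroid 2 4)"
  shows "\<not> in_M2 M \<and>
    (\<forall>C D. C \<subseteq> ground M \<and> D \<subseteq> ground M \<and> C \<inter> D = {} \<and> C \<union> D \<noteq> {}
        \<longrightarrow> in_M2 (minor_of M C D))"
  unfolding M_def ground_U24_sum using U24_sum_not_in_M2 proper_minor_U24_sum_in_M2 by blast

end
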